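(* Let $\mathcal{C}$ be a category and $A$ an object of $\mathcal{C}$ satisfying the axioms RC0, RC1, RC2 below. Then every arrow $x\colon A\to X$ in $\mathcal{C}$ is a quotient of $A$ by the subgroup $H=\mathrm{Fix}(x)=\{h\in \mathrm{Aut}(A): x\circ h=x\}$; that is, the quotient $q\colon A\to A/H$ exists and the unique arrow $\varepsilon\colon A/H\to X$ with $\varepsilon\circ q=x$ is an isomorphism.
   Context: An arrow $f\colon X\to Y$ is a strict epimorphism if for every arrow $g\colon X\to Z$ which is compatible with $f$ (meaning: for every object $C$ and all $u,v\colon C\to X$ with $f\circ u=f\circ v$ one has $g\circ u=g\circ v$) there is a unique $k\colon Y\to Z$ with $g=k\circ f$. If $H$ is a group acting on an object $A$ by automorphisms (a group homomorphism $H\to \mathrm{Aut}(A)^{op}$; write $h$ also for the corresponding automorphism), the quotient $q\colon A\to A/H$ is an arrow with $q\circ h=q$ for all $h\in H$ which is universal: every $x\colon A\to X$ with $x\circ h=x$ for all $h\in H$ factors uniquely as $x=\varphi\circ q$. Write $[A,X]$ for the hom-set. Axioms: RC0: for every object $X$ there exists an arrow $A\to X$, and every arrow $A\to X$ is a strict epimorphism. RC1: for every subgroup $H\subseteq\mathrm{Aut}(A)$ the quotient $q\colon A\to A/H$ exists and is preserved by $[A,-]$, i.e. the map $[A,A]\to[A,A/H]$, $f\mapsto q\circ f$, is surjective and $q\circ f=q\circ g$ holds iff $f=h\circ g$ for some $h\in H$. RC2: every endomorphism of $A$ is an automorphism, $[A,A]=\mathrm{Aut}(A)$. *)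

theory Defs
  imports Main
begin

record ('o, 'a) cat =
  Obj  :: "'o set"
  Arr  :: "'a set"
  dom  :: "'a \<Rightarrow> 'o"
  cod  :: "'a \<Rightarrow> 'o"
  comp :: "'a \<Rightarrow> 'a \<Rightarrow> 'a"
  idt  :: "'o \<Rightarrow> 'a"

definition category :: "('o, 'a) cat \<Rightarrow> bool" where
  "category C \<longleftrightarrow>
     (\<forall>f\<in>Arr C. dom C f \<in> Obj C \<and> cod C f \<in> Obj C) \<and>
     (\<forall>f\<in>Arr C. \<forall>g\<in>Arr C. cod C f = dom C g \<longrightarrow>
        comp C g f \<in> Arr C \<and> dom C (comp C g f) = dom C f \<and> cod C (comp C g f) = cod C g) \<and>
     (\<forall>X\<in>Obj C. idt C X \<in> Arr C \<and> dom C (idt C X) = X \<and> cod C (idt C X) = X) \<and>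
     (\<forall>f\<in>Arr C. comp C f (idt C (dom C f)) = f \<and> comp C (idt C (cod C f)) f = f) \<and>
     (\<forall>f\<in>Arr C. \<forall>g\<in>Arr C. \<forall>h\<in>Arr C. cod C f = dom C g \<longrightarrow> cod C g = dom C h \<longrightarrow>
        comp C h (comp C g f) = comp C (comp C h g) f)"

definition hom :: "('o, 'a) cat \<Rightarrow> 'o \<Rightarrow> 'o \<Rightarrow> 'a set" where
  "hom C X Y = {f \<in> Arr C. dom C f = X \<and> cod C f = Y}"

definition iso :: "('o, 'a) cat \<Rightarrow> 'a \<Rightarrow> bool" where
  "iso C f \<longleftrightarrow> f \<in> Arr C \<and>
     (\<exists>g \<in> hom C (cod C f) (dom C f).
        comp C g f = idt C (dom C f) \<and> comp C f g = idt C (cod C f))"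

definition Aut :: "('o, 'a) cat \<Rightarrow> 'o \<Rightarrow> 'a set" where
  "Aut C A = {f \<in> hom C A A. iso C f}"

definition aut_subgroup :: "('o, 'a) cat \<Rightarrow> 'o \<Rightarrow> 'a set \<Rightarrow> bool" where
  "aut_subgroup C A H \<longleftrightarrow> H \<subseteq> Aut C A \<and> idt C A \<in> H \<and>
     (\<forall>g\<in>H. \<forall>h\<in>H. comp C g h \<in> H) \<and>
     (\<forall>h\<in>H. \<exists>k\<in>H. comp C k h = idt C A \<and> comp C h k = idt C A)"

definition compatible :: "('o, 'a) cat \<Rightarrow> 'a \<Rightarrow> 'a \<Rightarrow> bool" where
  "compatible C f g \<longleftrightarrow>
     (\<forall>Z\<in>Obj C. \<forall>u\<in>hom C Z (dom C f). \<forall>v\<in>hom C Z (dom C f).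
        comp C f u = comp C f v \<longrightarrow> comp C g u = comp C g v)"

definition strict_epi :: "('o, 'a) cat \<Rightarrow> 'a \<Rightarrow> bool" where
  "strict_epi C f \<longleftrightarrow> f \<in> Arr C \<and>
     (\<forall>Z\<in>Obj C. \<forall>g\<in>hom C (dom C f) Z. compatible C f g \<longrightarrow>
        (\<exists>!k. k \<in> hom C (cod C f) Z \<and> g = comp C k f))"

definition is_quotient :: "('o, 'a) cat \<Rightarrow> 'o \<Rightarrow> 'a set \<Rightarrow> 'o \<Rightarrow> 'a \<Rightarrow> bool" where
  "is_quotient C A H Q q \<longleftrightarrow> q \<in> hom C A Q \<and> (\<forall>h\<in>H. comp C q h = q) \<and>
     (\<forall>X\<in>Obj C. \<forall>x\<in>hom C A X. (\<forall>h\<in>H. comp C x h = x) \<longrightarrow>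
        (\<exists>!\<phi>. \<phi> \<in> hom C Q X \<and> x = comp C \<phi> q))"

text \<open>The quotient is preserved by the hom functor [A,-].\<close>
definition preserved_by_hom :: "('o, 'a) cat \<Rightarrow> 'o \<Rightarrow> 'a set \<Rightarrow> 'o \<Rightarrow> 'a \<Rightarrow> bool" where
  "preserved_by_hom C A H Q q \<longleftrightarrow>
     (\<forall>y\<in>hom C A Q. \<exists>f\<in>hom C A A. y = comp C q f) \<and>
     (\<forall>f\<in>hom C A A. \<forall>g\<in>hom C A A.
        comp C q f = comp C q g \<longleftrightarrow> (\<exists>h\<in>H. f = comp C h g))"

definition RC0 :: "('o, 'a) cat \<Rightarrow> 'o \<Rightarrow> bool" where
  "RC0 C A \<longleftrightarrow> (\<forall>X\<in>Obj C. hom C A X \<noteq> {} \<and> (\<forall>f\<in>hom C A X. strict_epi C f))"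

definition RC1 :: "('o, 'a) cat \<Rightarrow> 'o \<Rightarrow> bool" where
  "RC1 C A \<longleftrightarrow> (\<forall>H. aut_subgroup C A H \<longrightarrow>
     (\<exists>Q q. is_quotient C A H Q q \<and> preserved_by_hom C A H Q q))"

definition RC2 :: "('o, 'a) cat \<Rightarrow> 'o \<Rightarrow> bool" where
  "RC2 C A \<longleftrightarrow> hom C A A = Aut C A"

definition Fix :: "('o, 'a) cat \<Rightarrow> 'o \<Rightarrow> 'a \<Rightarrow> 'a set" where
  "Fix C A x = {h \<in> Aut C A. comp C x h = x}"

end

theory Submission
  imports Defs
begin

text \<open>Let \<open>y : A \<rightarrow> Y\<close> be invariant under \<open>H = Fix(x)\<close>. If \<open>x u = x v\<close> for
  \<open>u, v : Z \<rightarrow> A\<close>, choose \<open>a : A \<rightarrow> Z\<close> by RC0; by RC2 \<open>u a\<close> and \<open>v a\<close> are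
  automorphisms and \<open>(u a)(v a)\<inverse>\<close> lies in \<open>H\<close>, so \<open>y u a = y v a\<close>, and \<open>y u = y v\<close>
  because \<open>a\<close> is epi. Thus \<open>y\<close> is compatible with \<open>x\<close>. Applied to the quotient map
  \<open>q : A \<rightarrow> A/H\<close>, strictness of \<open>x\<close> gives \<open>k\<close> with \<open>q = k x\<close>; then \<open>\<epsilon> k x = x\<close> and
  \<open>k \<epsilon> q = q\<close>, and as \<open>x\<close> and \<open>q\<close> are epimorphisms, \<open>k\<close> is inverse to \<open>\<epsilon>\<close>.\<close>

lemma hom_obj:
  assumes "category C" "f \<in> hom C X Y"
  shows "X \<in> Obj C" "Y \<in> Obj C"
  using assms unfolding category_def hom_def by auto

lemma hom_comp:
  assumes "category C" "f \<in> hom C X Y" "g \<in> hom C Y Z"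
  shows "comp C g f \<in> hom C X Z"
  using assms unfolding category_def hom_def by simp

lemma hom_assoc:
  assumes "category C" "f \<in> hom C X Y" "g \<in> hom C Y Z" "h \<in> hom C Z W"
  shows "comp C h (comp C g f) = comp C (comp C h g) f"
  using assms unfolding category_def hom_def by simp

lemma hom_idt:
  assumes "category C" "X \<in> Obj C"
  shows "idt C X \<in> hom C X X"
  using assms unfolding category_def hom_def by simp

lemma hom_comp_idt_left:
  assumes "category C" "f \<in> hom C X Y"
  shows "comp C (idt C Y) f = f"
  using assms unfolding category_def hom_def by auto

lemma hom_comp_idt_right:
  assumes "category C" "f \<in> hom C X Y"
  shows "comp C f (idt C X) = f"
  using assms unfolding category_def hom_def by auto

lemma iso_if_inverse:
  assumes "f \<in> hom C X Y" "g \<in> hom C Y X"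
    and "comp C g f = idt C X" "comp C f g = idt C Y"
  shows "iso C f"
  using assms unfolding iso_def hom_def by auto

lemma compatible_comp:
  assumes "category C" "f \<in> hom C X Y" "k \<in> hom C Y Z"
  shows "compatible C f (comp C k f)"
  unfolding compatible_def
proof (intro ballI impI)
  fix W u v
  assume "u \<in> hom C W (dom C f)" "v \<in> hom C W (dom C f)" and fuv: "comp C f u = comp C f v"
  then have u: "u \<in> hom C W X" and v: "v \<in> hom C W X"
    using assms(2) by (simp_all add: hom_def)
  have "comp C (comp C k f) u = comp C k (comp C f u)"
    using hom_assoc[OF assms(1) u assms(2,3)] by simp
  also have "\<dots> = comp C (comp C k f) v"
    using fuv hom_assoc[OF assms(1) v assms(2,3)] by simp
  finally show "comp C (comp C k f) u = comp C (comp C k f) v" .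
qed

lemma strict_epi_factor:
  assumes "strict_epi C f" "f \<in> hom C X Y" "g \<in> hom C X Z" "Z \<in> Obj C"
    and "compatible C f g"
  shows "\<exists>!k. k \<in> hom C Y Z \<and> g = comp C k f"
  using assms unfolding strict_epi_def hom_def by auto

lemma strict_epi_cancel:
  assumes "category C" "strict_epi C f" "f \<in> hom C X Y"
    and "k1 \<in> hom C Y Z" "k2 \<in> hom C Y Z" "comp C k1 f = comp C k2 f"
  shows "k1 = k2"
proof -
  have "\<exists>!k. k \<in> hom C Y Z \<and> comp C k1 f = comp C k f"
    using strict_epi_factor[OF assms(2,3) hom_comp[OF assms(1,3,4)]
        hom_obj(2)[OF assms(1,4)] compatible_comp[OF assms(1,3,4)]] .
  then show ?thesis using assms(4-6) by metis
qed

lemma iso_if_strict_epis_factor: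
  assumes "category C" "strict_epi C x" "strict_epi C q"
    and x: "x \<in> hom C A X" and q: "q \<in> hom C A Q" and "compatible C x q"
    and e: "\<epsilon> \<in> hom C Q X" and eq: "comp C \<epsilon> q = x"
  shows "iso C \<epsilon>"
proof -
  note cat = assms(1)
  obtain k where k: "k \<in> hom C X Q" and qkx: "q = comp C k x"
    using strict_epi_factor[OF assms(2) x q hom_obj(2)[OF cat q] assms(6)] by blast
  have "comp C (comp C \<epsilon> k) x = comp C (idt C X) x"
    using hom_assoc[OF cat x k e] qkx eq hom_comp_idt_left[OF cat x] by simp
  then have "comp C \<epsilon> k = idt C X"
    using strict_epi_cancel[OF cat assms(2) x hom_comp[OF cat k e] hom_idt[OF cat hom_obj(2)[OF cat x]]]
    by simp
  moreover have "comp C (comp C k \<epsilon>) q = comp C (idt C Q) q"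
    using hom_assoc[OF cat q e k] qkx eq hom_comp_idt_left[OF cat q] by simp
  then have "comp C k \<epsilon> = idt C Q"
    using strict_epi_cancel[OF cat assms(3) q hom_comp[OF cat e k] hom_idt[OF cat hom_obj(2)[OF cat q]]]
    by simp
  ultimately show ?thesis using iso_if_inverse[OF e k] by simp
qed

lemma Aut_inverse:
  assumes "h \<in> Aut C A"
  shows "\<exists>g\<in>Aut C A. comp C g h = idt C A \<and> comp C h g = idt C A"
proof -
  from assms obtain g where g: "g \<in> hom C A A" "comp C g h = idt C A" "comp C h g = idt C A"
    unfolding Aut_def iso_def hom_def by auto
  then have "iso C g" using iso_if_inverse[of g C A A h] assms by (simp add: Aut_def)
  with g show ?thesis by (auto simp: Aut_def)
qed

lemma idt_in_Aut:
  assumes cat: "category C" and "A \<in> Obj C"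
  shows "idt C A \<in> Aut C A"
proof -
  have idA: "idt C A \<in> hom C A A" using hom_idt[OF assms] .
  then have "iso C (idt C A)"
    using iso_if_inverse[OF idA idA] hom_comp_idt_left[OF cat idA] by simp
  with idA show ?thesis by (simp add: Aut_def)
qed

lemma Aut_comp:
  assumes cat: "category C" and g: "g \<in> Aut C A" and h: "h \<in> Aut C A"
  shows "comp C g h \<in> Aut C A"
proof -
  obtain g' where g': "g' \<in> Aut C A" "comp C g' g = idt C A" "comp C g g' = idt C A"
    using Aut_inverse[OF g] by blast
  obtain h' where h': "h' \<in> Aut C A" "comp C h' h = idt C A" "comp C h h' = idt C A"
    using Aut_inverse[OF h] by blast
  have gA: "g \<in> hom C A A" and hA: "h \<in> hom C A A" and g'A: "g' \<in> hom C A A"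
    and h'A: "h' \<in> hom C A A"
    using g h g' h' by (simp_all add: Aut_def)
  have "comp C (comp C h' g') (comp C g h) = idt C A"
    using hom_assoc[OF cat hA gA hom_comp[OF cat g'A h'A]] hom_assoc[OF cat gA g'A h'A]
      g'(2) h'(2) hom_comp_idt_right[OF cat h'A] by simp
  moreover have "comp C (comp C g h) (comp C h' g') = idt C A"
    using hom_assoc[OF cat g'A h'A hom_comp[OF cat hA gA]] hom_assoc[OF cat h'A hA gA]
      g'(3) h'(3) hom_comp_idt_right[OF cat gA] by simp
  ultimately show ?thesis
    using iso_if_inverse[OF hom_comp[OF cat hA gA] hom_comp[OF cat g'A h'A]]
      hom_comp[OF cat hA gA] by (simp add: Aut_def)
qed

lemma aut_subgroup_Fix:
  assumes cat: "category C" and x: "x \<in> hom C A X"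
  shows "aut_subgroup C A (Fix C A x)"
  unfolding aut_subgroup_def
proof (intro conjI ballI)
  show "Fix C A x \<subseteq> Aut C A" by (auto simp: Fix_def)
  show "idt C A \<in> Fix C A x"
    using idt_in_Aut[OF cat hom_obj(1)[OF cat x]] hom_comp_idt_right[OF cat x]
    by (simp add: Fix_def)
next
  fix g h assume "g \<in> Fix C A x" "h \<in> Fix C A x"
  then have g: "g \<in> Aut C A" "comp C x g = x" and h: "h \<in> Aut C A" "comp C x h = x"
    by (simp_all add: Fix_def)
  have "g \<in> hom C A A" "h \<in> hom C A A" using g h by (simp_all add: Aut_def)
  then have "comp C x (comp C g h) = x" using hom_assoc[OF cat _ _ x] g h by metis
  then show "comp C g h \<in> Fix C A x" using Aut_comp[OF cat g(1) h(1)] by (simp add: Fix_def)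
next
  fix h assume "h \<in> Fix C A x"
  then have h: "h \<in> Aut C A" "comp C x h = x" by (simp_all add: Fix_def)
  obtain g where g: "g \<in> Aut C A" "comp C g h = idt C A" "comp C h g = idt C A"
    using Aut_inverse[OF h(1)] by blast
  have "g \<in> hom C A A" "h \<in> hom C A A" using g h by (simp_all add: Aut_def)
  then have "comp C x g = comp C x (comp C h g)" using hom_assoc[OF cat _ _ x] h(2) by metis
  also have "\<dots> = x" using g(3) hom_comp_idt_right[OF cat x] by simp
  finally have "g \<in> Fix C A x" using g(1) by (simp add: Fix_def)
  with g show "\<exists>k\<in>Fix C A x. comp C k h = idt C A \<and> comp C h k = idt C A" by blast
qed

lemma compatible_if_Fix_invariant:
  assumes cat: "category C" and "RC0 C A" and "RC2 C A"
    and x: "x \<in> hom C A X" and y: "y \<in> hom C A Y"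
    and y_inv: "\<forall>h\<in>Fix C A x. comp C y h = y"
  shows "compatible C x y"
  unfolding compatible_def
proof (intro ballI impI)
  fix Z u v
  assume Z: "Z \<in> Obj C" and "u \<in> hom C Z (dom C x)" "v \<in> hom C Z (dom C x)"
    and xuv: "comp C x u = comp C x v"
  then have u: "u \<in> hom C Z A" and v: "v \<in> hom C Z A"
    using x by (simp_all add: hom_def)
  obtain a where a: "a \<in> hom C A Z" and a_epi: "strict_epi C a"
    using \<open>RC0 C A\<close> Z unfolding RC0_def by blast
  have ua: "comp C u a \<in> hom C A A" and va: "comp C v a \<in> hom C A A"
    using hom_comp[OF cat a u] hom_comp[OF cat a v] .
  then obtain w where w: "w \<in> hom C A A" "comp C w (comp C v a) = idt C A"
      "comp C (comp C v a) w = idt C A"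
    using Aut_inverse[of "comp C v a" C A] \<open>RC2 C A\<close> by (auto simp: RC2_def Aut_def)
  define h where "h = comp C (comp C u a) w"
  have hA: "h \<in> hom C A A" unfolding h_def using hom_comp[OF cat w(1) ua] .
  have "comp C x h = comp C (comp C x (comp C v a)) w"
    unfolding h_def using hom_assoc[OF cat w(1) ua x] hom_assoc[OF cat a u x]
      hom_assoc[OF cat a v x] xuv by simp
  also have "\<dots> = x"
    using hom_assoc[OF cat w(1) va x] w(3) hom_comp_idt_right[OF cat x] by simp
  finally have "h \<in> Fix C A x" using hA \<open>RC2 C A\<close> by (simp add: Fix_def RC2_def)
  have hva: "comp C h (comp C v a) = comp C u a"
    unfolding h_def using hom_assoc[OF cat va w(1) ua] w(2) hom_comp_idt_right[OF cat ua] by simp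
  have "comp C (comp C y u) a = comp C (comp C y h) (comp C v a)"
    using hom_assoc[OF cat a u y] hom_assoc[OF cat va hA y] hva by simp
  also have "\<dots> = comp C (comp C y v) a"
    using y_inv \<open>h \<in> Fix C A x\<close> hom_assoc[OF cat a v y] by simp
  finally show "comp C y u = comp C y v"
    using strict_epi_cancel[OF cat a_epi a hom_comp[OF cat u y] hom_comp[OF cat v y]] by simp
qed

theorem proposition2p8:
  fixes C :: "('o, 'a) cat" and A :: 'o
  assumes "category C" and "A \<in> Obj C"
    and "RC0 C A" and "RC1 C A" and "RC2 C A"
  shows "\<forall>X\<in>Obj C. \<forall>x\<in>hom C A X.
           (\<exists>Q q. is_quotient C A (Fix C A x) Q q) \<and>
           (\<forall>Q q. is_quotient C A (Fix C A x) Q q \<longrightarrow>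
              (\<forall>\<epsilon>\<in>hom C Q X. comp C \<epsilon> q = x \<longrightarrow> iso C \<epsilon>))"
proof (intro ballI conjI allI impI)
  fix X x assume X: "X \<in> Obj C" and x: "x \<in> hom C A X"
  show "\<exists>Q q. is_quotient C A (Fix C A x) Q q"
    using \<open>RC1 C A\<close> aut_subgroup_Fix[OF \<open>category C\<close> x] unfolding RC1_def by blast
  fix Q q \<epsilon>
  assume quot: "is_quotient C A (Fix C A x) Q q" and e: "\<epsilon> \<in> hom C Q X" and eq: "comp C \<epsilon> q = x"
  have q: "q \<in> hom C A Q" and q_inv: "\<forall>h\<in>Fix C A x. comp C q h = q"
    using quot unfolding is_quotient_def by blast+
  have "strict_epi C x" "strict_epi C q"
    using \<open>RC0 C A\<close> X x hom_obj(2)[OF \<open>category C\<close> q] q unfolding RC0_def by blast+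
  moreover have "compatible C x q"
    using compatible_if_Fix_invariant[OF assms(1,3,5) x q q_inv] .
  ultimately show "iso C \<epsilon>"
    using iso_if_strict_epis_factor[OF \<open>category C\<close> _ _ x q _ e eq] by blast
qed

end
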